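(* Let $X,Y$ be compact metric spaces, $f:X\dashrightarrow Y$ a continuous open-dense defined map, and $U\subset X$ an open dense set such that $f(U)$ is open dense in $Y$ and $f|_U:U\to f(U)$ is a proper covering map of finite degree $\deg(f)$. Then $f^*(SM^+(Y))\subset SM^+(X)$, and for every $\nu\in SM^+(Y)$ we have $f^*(\nu)(\pm1)=\deg(f)\,\nu(\pm1)$; in particular $\|f^*(\nu)\|=\deg(f)\|\nu\|$.
   Context: Strong submeasures: sub-linear bounded maps $C^0(X)\to\mathbb{R}$, with norm $\|\mu\|$ the least $C$ with $|\mu(\varphi)|\le C\|\varphi\|_{L^\infty}$; positive means non-decreasing; $SM^+$ denotes positive strong submeasures. A continuous open-dense defined map $f:X\dashrightarrow Y$ is a continuous map defined on an open dense subset of $X$. For open dense $V\subset Y$ and bounded $g:V\to\mathbb{R}$, $E(g)=g$ on $V$ and $E(g)(y)=\limsup_{z\in V,z\to y}g(z)$ for $y\notin V$. For $\varphi\in C^0(X)$, $(f|_U)_*(\varphi)(y)=\sum_{x\in U,f(x)=y}\varphi(x)$ (continuous on $f(U)$) and $f_*(\varphi):=E((f|_U)_*(\varphi))$, a bounded upper-semicontinuous function on $Y$. For $\nu\in SM^+(Y)$ and $\varphi\in C^0(X)$, $f^*(\nu)(\varphi):=\inf\{\nu(\psi):\psi\in C^0(Y),\ \psi\ge f_*(\varphi)\}$. *)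

theory Defs
  imports "HOL-Analysis.Analysis"
begin

text \<open>The compact metric spaces X, Y are modelled as types of class metric_space whose
  universe is compact.  C^0(X) is the set of functions continuous on UNIV.\<close>

definition sup_norm :: "('a \<Rightarrow> real) \<Rightarrow> real" where
  "sup_norm \<phi> = Sup (range (\<lambda>x. \<bar>\<phi> x\<bar>))"

definition strong_submeasure :: "(('a::topological_space \<Rightarrow> real) \<Rightarrow> real) \<Rightarrow> bool" where
  "strong_submeasure \<mu> \<longleftrightarrow>
     (\<forall>\<phi> \<psi>. continuous_on UNIV \<phi> \<longrightarrow> continuous_on UNIV \<psi> \<longrightarrow> \<mu> (\<lambda>x. \<phi> x + \<psi> x) \<le> \<mu> \<phi> + \<mu> \<psi>) \<and>
     (\<forall>\<phi> (t::real). continuous_on UNIV \<phi> \<longrightarrow> t \<ge> 0 \<longrightarrow> \<mu> (\<lambda>x. t * \<phi> x) = t * \<mu> \<phi>) \<and>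
     (\<exists>C. \<forall>\<phi>. continuous_on UNIV \<phi> \<longrightarrow> \<bar>\<mu> \<phi>\<bar> \<le> C * sup_norm \<phi>)"

definition positive_strong_submeasure :: "(('a::topological_space \<Rightarrow> real) \<Rightarrow> real) \<Rightarrow> bool" where
  "positive_strong_submeasure \<mu> \<longleftrightarrow> strong_submeasure \<mu> \<and>
     (\<forall>\<phi> \<psi>. continuous_on UNIV \<phi> \<longrightarrow> continuous_on UNIV \<psi> \<longrightarrow> (\<forall>x. \<phi> x \<le> \<psi> x) \<longrightarrow> \<mu> \<phi> \<le> \<mu> \<psi>)"

definition sm_norm :: "(('a::topological_space \<Rightarrow> real) \<Rightarrow> real) \<Rightarrow> real" where
  "sm_norm \<mu> = Inf {C. \<forall>\<phi>. continuous_on UNIV \<phi> \<longrightarrow> \<bar>\<mu> \<phi>\<bar> \<le> C * sup_norm \<phi>}"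

definition ext_limsup :: "'b::metric_space set \<Rightarrow> ('b \<Rightarrow> real) \<Rightarrow> 'b \<Rightarrow> real" where
  "ext_limsup V g y = (if y \<in> V then g y
      else real_of_ereal (Limsup (at y within V) (\<lambda>z. ereal (g z))))"

definition push_fwd :: "'a set \<Rightarrow> ('a \<Rightarrow> 'b::metric_space) \<Rightarrow> ('a \<Rightarrow> real) \<Rightarrow> 'b \<Rightarrow> real" where
  "push_fwd U f \<phi> = ext_limsup (f ` U) (\<lambda>y. \<Sum>x\<in>{x\<in>U. f x = y}. \<phi> x)"

definition pull_back :: "'a set \<Rightarrow> ('a \<Rightarrow> 'b::metric_space) \<Rightarrow> (('b \<Rightarrow> real) \<Rightarrow> real)
    \<Rightarrow> ('a \<Rightarrow> real) \<Rightarrow> real" where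
  "pull_back U f \<nu> \<phi> = Inf {\<nu> \<psi> | \<psi>. continuous_on UNIV \<psi> \<and> (\<forall>y. push_fwd U f \<phi> y \<le> \<psi> y)}"

end

theory Submission
  imports Defs
begin

text \<open>Positivity and homogeneity show that a positive strong submeasure \<open>\<mu>\<close> on a compact space
  satisfies \<open>\<parallel>\<phi>\<parallel> \<mu>(-1) \<le> \<mu> \<phi> \<le> \<parallel>\<phi>\<parallel> \<mu>(1)\<close>, so its norm is \<open>max \<bar>\<mu>(1)\<bar> \<bar>\<mu>(-1)\<bar>\<close>.
  The push-forward \<open>f\<^sub>*\<close> is sublinear, monotone and bounded by \<open>deg f \<parallel>\<phi>\<parallel>\<close>, because fibre sums are
  and the limsup extension preserves these properties; it maps the constant \<open>c\<close> to \<open>deg f \<cdot> c\<close>.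
  Taking infima over continuous majorants transfers everything to \<open>f\<^sup>*\<nu>\<close>, which is
  therefore a positive strong submeasure with \<open>f\<^sup>*\<nu>(\<plusminus>1) = deg f \<cdot> \<nu>(\<plusminus>1)\<close>, and the norm
  identity follows from the norm formula.\<close>

section \<open>Positive strong submeasures\<close>

lemma abs_le_sup_norm:
  fixes \<phi> :: "'a::topological_space \<Rightarrow> real"
  assumes "compact (UNIV :: 'a set)" "continuous_on UNIV \<phi>"
  shows "\<bar>\<phi> x\<bar> \<le> sup_norm \<phi>"
proof -
  have "compact (range (\<lambda>x. \<bar>\<phi> x\<bar>))"
    using assms by (intro compact_continuous_image continuous_intros) auto
  then have "bdd_above (range (\<lambda>x. \<bar>\<phi> x\<bar>))"
    by (simp add: bounded_imp_bdd_above compact_imp_bounded)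
  then show ?thesis unfolding sup_norm_def by (rule cSUP_upper[OF UNIV_I])
qed

lemma sup_norm_nonneg:
  fixes \<phi> :: "'a::topological_space \<Rightarrow> real"
  assumes "compact (UNIV :: 'a set)" "continuous_on UNIV \<phi>"
  shows "sup_norm \<phi> \<ge> 0"
  using abs_le_sup_norm[OF assms] abs_ge_zero order_trans by blast

lemma sup_norm_const [simp]: "sup_norm (\<lambda>_. c) = \<bar>c\<bar>"
  unfolding sup_norm_def by simp

lemma positive_strong_submeasure_add:
  assumes "positive_strong_submeasure \<mu>" "continuous_on UNIV \<phi>" "continuous_on UNIV \<psi>"
  shows "\<mu> (\<lambda>x. \<phi> x + \<psi> x) \<le> \<mu> \<phi> + \<mu> \<psi>"
  using assms unfolding positive_strong_submeasure_def strong_submeasure_def by blast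

lemma positive_strong_submeasure_scale:
  assumes "positive_strong_submeasure \<mu>" "continuous_on UNIV \<phi>" "t \<ge> 0"
  shows "\<mu> (\<lambda>x. t * \<phi> x) = t * \<mu> \<phi>"
  using assms unfolding positive_strong_submeasure_def strong_submeasure_def by blast

lemma positive_strong_submeasure_const:
  assumes "positive_strong_submeasure \<mu>" "c \<ge> 0"
  shows "\<mu> (\<lambda>_. c * a) = c * \<mu> (\<lambda>_. a)"
  using positive_strong_submeasure_scale[OF assms(1) continuous_on_const assms(2)] .

lemma positive_strong_submeasure_mono:
  assumes "positive_strong_submeasure \<mu>" "continuous_on UNIV \<phi>" "continuous_on UNIV \<psi>"
    "\<And>x. \<phi> x \<le> \<psi> x"
  shows "\<mu> \<phi> \<le> \<mu> \<psi>"
  using assms unfolding positive_strong_submeasure_def by blast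

lemma abs_le_sup_norm_if_mono_homogeneous:
  fixes \<mu> :: "('a::topological_space \<Rightarrow> real) \<Rightarrow> real"
  assumes compact: "compact (UNIV :: 'a set)" and \<phi>: "continuous_on UNIV \<phi>"
    and mono: "\<And>\<phi> \<psi>. continuous_on UNIV \<phi> \<Longrightarrow> continuous_on UNIV \<psi> \<Longrightarrow>
                 (\<And>x. \<phi> x \<le> \<psi> x) \<Longrightarrow> \<mu> \<phi> \<le> \<mu> \<psi>"
    and homogeneous: "\<And>c a. c \<ge> 0 \<Longrightarrow> \<mu> (\<lambda>_. c * a) = c * \<mu> (\<lambda>_. a)"
  shows "\<bar>\<mu> \<phi>\<bar> \<le> max \<bar>\<mu> (\<lambda>_. 1)\<bar> \<bar>\<mu> (\<lambda>_. -1)\<bar> * sup_norm \<phi>"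
proof -
  let ?M = "max \<bar>\<mu> (\<lambda>_. 1)\<bar> \<bar>\<mu> (\<lambda>_. -1)\<bar>" and ?s = "sup_norm \<phi>"
  have s: "?s \<ge> 0" using sup_norm_nonneg[OF compact \<phi>] .
  have between: "- ?s \<le> \<phi> x" "\<phi> x \<le> ?s" for x
    using abs_le_sup_norm[OF compact \<phi>, of x] by linarith+
  have "\<mu> \<phi> \<le> \<mu> (\<lambda>_. ?s * 1)"
    using between by (intro mono \<phi>) auto
  also have "\<dots> = ?s * \<mu> (\<lambda>_. 1)" using homogeneous[OF s] .
  also have "\<dots> \<le> ?s * ?M" by (rule mult_left_mono[OF _ s]) auto
  finally have upper: "\<mu> \<phi> \<le> ?s * ?M" .
  have "?s * \<mu> (\<lambda>_. -1) = \<mu> (\<lambda>_. ?s * -1)" by (rule homogeneous[OF s, symmetric])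
  also have "\<dots> \<le> \<mu> \<phi>"
    using between by (intro mono \<phi>) auto
  finally have lower: "?s * \<mu> (\<lambda>_. -1) \<le> \<mu> \<phi>" .
  have "?s * (- \<mu> (\<lambda>_. -1)) \<le> ?s * ?M" by (rule mult_left_mono[OF _ s]) auto
  with upper lower show ?thesis by (simp add: abs_le_iff mult.commute)
qed

lemma sm_norm_positive_strong_submeasure:
  fixes \<mu> :: "('a::topological_space \<Rightarrow> real) \<Rightarrow> real"
  assumes compact: "compact (UNIV :: 'a set)" and \<mu>: "positive_strong_submeasure \<mu>"
  shows "sm_norm \<mu> = max \<bar>\<mu> (\<lambda>_. 1)\<bar> \<bar>\<mu> (\<lambda>_. -1)\<bar>"
  unfolding sm_norm_def
proof (rule cInf_eq_minimum)
  show "max \<bar>\<mu> (\<lambda>_. 1)\<bar> \<bar>\<mu> (\<lambda>_. -1)\<bar>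
          \<in> {C. \<forall>\<phi>. continuous_on UNIV \<phi> \<longrightarrow> \<bar>\<mu> \<phi>\<bar> \<le> C * sup_norm \<phi>}"
    by (intro CollectI allI impI abs_le_sup_norm_if_mono_homogeneous[OF compact]
        positive_strong_submeasure_mono[OF \<mu>] positive_strong_submeasure_const[OF \<mu>])
next
  fix C assume "C \<in> {C. \<forall>\<phi>. continuous_on UNIV \<phi> \<longrightarrow> \<bar>\<mu> \<phi>\<bar> \<le> C * sup_norm \<phi>}"
  then have "\<bar>\<mu> (\<lambda>_. a)\<bar> \<le> C * \<bar>a\<bar>" for a
    using continuous_on_const by fastforce
  from this[of 1] this[of "-1"] show "max \<bar>\<mu> (\<lambda>_. 1)\<bar> \<bar>\<mu> (\<lambda>_. -1)\<bar> \<le> C" by simp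
qed

lemma Limsup_ereal_bounded:
  fixes g :: "'x \<Rightarrow> real"
  assumes "F \<noteq> bot" and "eventually (\<lambda>z. \<bar>g z\<bar> \<le> B) F"
  obtains r where "Limsup F (\<lambda>z. ereal (g z)) = ereal r" and "\<bar>r\<bar> \<le> B"
proof -
  have "Limsup F (\<lambda>z. ereal (g z)) \<le> ereal B"
    by (rule Limsup_bounded) (use assms(2) in \<open>eventually_elim, auto\<close>)
  moreover have "ereal (-B) \<le> Limsup F (\<lambda>z. ereal (g z))"
    by (rule le_Limsup[OF assms(1)]) (use assms(2) in \<open>eventually_elim, auto\<close>)
  ultimately show ?thesis
    using that by (cases "Limsup F (\<lambda>z. ereal (g z))") auto
qed

lemma Limsup_ereal_add_le:
  fixes g h :: "'x \<Rightarrow> real"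
  assumes g: "Limsup F (\<lambda>z. ereal (g z)) = ereal a" and h: "Limsup F (\<lambda>z. ereal (h z)) = ereal b"
  shows "Limsup F (\<lambda>z. ereal (g z + h z)) \<le> ereal (a + b)"
  unfolding Limsup_le_iff
proof (intro allI impI)
  fix y assume y: "ereal (a + b) < y"
  show "\<forall>\<^sub>F z in F. ereal (g z + h z) < y"
  proof (cases y)
    case (real r)
    define e where "e = (r - a - b) / 2"
    have "e > 0" using y real by (simp add: e_def)
    then have "\<forall>\<^sub>F z in F. ereal (g z) < ereal (a + e)" "\<forall>\<^sub>F z in F. ereal (h z) < ereal (b + e)"
      by (intro Limsup_lessD; simp add: g h)+
    then show ?thesis
      by eventually_elim (simp add: real e_def field_simps)
  qed (use y in auto)
qed

section \<open>The limsup extension from a dense set\<close>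

context
  fixes V :: "'b::metric_space set"
  assumes dense: "closure V = UNIV"
begin

lemma at_within_dense_nontrivial: "y \<notin> V \<Longrightarrow> at y within V \<noteq> bot"
  using dense by (simp add: at_within_eq_bot_iff)

lemma Limsup_eq_ext_limsup:
  fixes g :: "'b \<Rightarrow> real"
  assumes "y \<notin> V" and "bounded (g ` V)"
  shows "Limsup (at y within V) (\<lambda>z. ereal (g z)) = ereal (ext_limsup V g y)"
proof -
  obtain B where "\<forall>z\<in>V. \<bar>g z\<bar> \<le> B" using assms(2) by (auto simp: bounded_real)
  then have "eventually (\<lambda>z. \<bar>g z\<bar> \<le> B) (at y within V)"
    by (simp add: eventually_at_filter)
  then obtain r where "Limsup (at y within V) (\<lambda>z. ereal (g z)) = ereal r"
    using Limsup_ereal_bounded[OF at_within_dense_nontrivial[OF assms(1)]] by blast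
  then show ?thesis using assms(1) by (simp add: ext_limsup_def)
qed

lemma abs_ext_limsup_le:
  assumes "\<And>z. z \<in> V \<Longrightarrow> \<bar>g z\<bar> \<le> B"
  shows "\<bar>ext_limsup V g y\<bar> \<le> B"
proof (cases "y \<in> V")
  case False
  have "eventually (\<lambda>z. \<bar>g z\<bar> \<le> B) (at y within V)"
    using assms by (simp add: eventually_at_filter)
  then obtain r where "Limsup (at y within V) (\<lambda>z. ereal (g z)) = ereal r" "\<bar>r\<bar> \<le> B"
    using Limsup_ereal_bounded[OF at_within_dense_nontrivial[OF False]] by blast
  then show ?thesis using False by (simp add: ext_limsup_def)
qed (use assms in \<open>simp add: ext_limsup_def\<close>)

lemma ext_limsup_const:
  assumes "\<And>z. z \<in> V \<Longrightarrow> g z = c"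
  shows "ext_limsup V g y = c"
proof (cases "y \<in> V")
  case False
  have "Limsup (at y within V) (\<lambda>z. ereal (g z)) = Limsup (at y within V) (\<lambda>z. ereal c)"
    by (rule Limsup_eq) (use assms in \<open>simp add: eventually_at_filter\<close>)
  also have "\<dots> = ereal c"
    by (rule Limsup_const) (use at_within_dense_nontrivial[OF False] in simp)
  finally show ?thesis using False by (simp add: ext_limsup_def)
qed (use assms in \<open>simp add: ext_limsup_def\<close>)

lemma ext_limsup_mono:
  assumes "bounded (g ` V)" "bounded (h ` V)" and le: "\<And>z. z \<in> V \<Longrightarrow> g z \<le> h z"
  shows "ext_limsup V g y \<le> ext_limsup V h y"
proof (cases "y \<in> V")
  case False
  have "Limsup (at y within V) (\<lambda>z. ereal (g z)) \<le> Limsup (at y within V) (\<lambda>z. ereal (h z))"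
    by (rule Limsup_mono) (use le in \<open>simp add: eventually_at_filter\<close>)
  then show ?thesis by (simp add: Limsup_eq_ext_limsup[OF False] assms(1,2))
qed (use le in \<open>simp add: ext_limsup_def\<close>)

lemma ext_limsup_add_le:
  assumes g: "bounded (g ` V)" and h: "bounded (h ` V)"
  shows "ext_limsup V (\<lambda>z. g z + h z) y \<le> ext_limsup V g y + ext_limsup V h y"
proof (cases "y \<in> V")
  case False
  have "ereal (ext_limsup V (\<lambda>z. g z + h z) y) = Limsup (at y within V) (\<lambda>z. ereal (g z + h z))"
    by (rule Limsup_eq_ext_limsup[OF False bounded_plus_comp[OF g h], symmetric])
  also have "\<dots> \<le> ereal (ext_limsup V g y + ext_limsup V h y)"
    by (rule Limsup_ereal_add_le; rule Limsup_eq_ext_limsup[OF False]) (fact g h)+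
  finally show ?thesis by simp
qed (simp add: ext_limsup_def)

lemma ext_limsup_scale:
  assumes g: "bounded (g ` V)" and t: "t \<ge> 0"
  shows "ext_limsup V (\<lambda>z. t * g z) y = t * ext_limsup V g y"
proof (cases "y \<in> V")
  case False
  have "Limsup (at y within V) (\<lambda>z. ereal (t * g z))
          = ereal t * Limsup (at y within V) (\<lambda>z. ereal (g z))"
    using Limsup_ereal_mult_left[OF at_within_dense_nontrivial[OF False] t,
        of "\<lambda>z. ereal (g z)"] by simp
  also have "\<dots> = ereal (t * ext_limsup V g y)" by (simp add: Limsup_eq_ext_limsup[OF False g])
  finally show ?thesis by (simp add: ext_limsup_def False)
qed (simp add: ext_limsup_def)

end

section \<open>Push-forward and pull-back\<close>

definition fibre_sum :: "'a set \<Rightarrow> ('a \<Rightarrow> 'b) \<Rightarrow> ('a \<Rightarrow> real) \<Rightarrow> 'b \<Rightarrow> real" where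
  "fibre_sum U f \<phi> y = (\<Sum>x\<in>{x\<in>U. f x = y}. \<phi> x)"

lemma push_fwd_eq_ext_limsup: "push_fwd U f \<phi> = ext_limsup (f ` U) (fibre_sum U f \<phi>)"
  by (simp add: push_fwd_def fibre_sum_def[abs_def])

context
  fixes U :: "'a::metric_space set" and f :: "'a \<Rightarrow> 'b::metric_space" and d :: nat
  assumes X_compact: "compact (UNIV :: 'a set)"
    and dense: "closure (f ` U) = UNIV"
    and degree: "\<forall>y\<in>f ` U. finite {x\<in>U. f x = y} \<and> card {x\<in>U. f x = y} = d"
begin

lemma abs_fibre_sum_le:
  assumes "continuous_on UNIV \<phi>" "y \<in> f ` U"
  shows "\<bar>fibre_sum U f \<phi> y\<bar> \<le> real d * sup_norm \<phi>"
proof -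
  have "\<bar>fibre_sum U f \<phi> y\<bar> \<le> (\<Sum>x\<in>{x\<in>U. f x = y}. \<bar>\<phi> x\<bar>)"
    unfolding fibre_sum_def by (rule sum_abs)
  also have "\<dots> \<le> real (card {x\<in>U. f x = y}) * sup_norm \<phi>"
    by (rule sum_bounded_above) (rule abs_le_sup_norm[OF X_compact assms(1)])
  finally show ?thesis using degree assms(2) by simp
qed

lemma bounded_fibre_sum: "continuous_on UNIV \<phi> \<Longrightarrow> bounded (fibre_sum U f \<phi> ` f ` U)"
  using abs_fibre_sum_le by (auto simp: bounded_real)

lemma abs_push_fwd_le: "continuous_on UNIV \<phi> \<Longrightarrow> \<bar>push_fwd U f \<phi> y\<bar> \<le> real d * sup_norm \<phi>"
  unfolding push_fwd_eq_ext_limsup by (intro abs_ext_limsup_le[OF dense] abs_fibre_sum_le)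

lemma push_fwd_const: "push_fwd U f (\<lambda>_. c) y = real d * c"
  unfolding push_fwd_eq_ext_limsup
proof (rule ext_limsup_const[OF dense])
  fix z assume "z \<in> f ` U"
  then have "card {x\<in>U. f x = z} = d" using degree by blast
  then show "fibre_sum U f (\<lambda>_. c) z = real d * c" by (simp add: fibre_sum_def)
qed

lemma push_fwd_mono:
  assumes "continuous_on UNIV \<phi>" "continuous_on UNIV \<psi>" "\<And>x. \<phi> x \<le> \<psi> x"
  shows "push_fwd U f \<phi> y \<le> push_fwd U f \<psi> y"
  unfolding push_fwd_eq_ext_limsup using assms
  by (intro ext_limsup_mono[OF dense] bounded_fibre_sum) (auto simp: fibre_sum_def intro: sum_mono)

lemma push_fwd_add_le:
  assumes "continuous_on UNIV \<phi>" "continuous_on UNIV \<psi>"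
  shows "push_fwd U f (\<lambda>x. \<phi> x + \<psi> x) y \<le> push_fwd U f \<phi> y + push_fwd U f \<psi> y"
proof -
  have "fibre_sum U f (\<lambda>x. \<phi> x + \<psi> x) = (\<lambda>y. fibre_sum U f \<phi> y + fibre_sum U f \<psi> y)"
    by (simp add: fibre_sum_def sum.distrib fun_eq_iff)
  then show ?thesis unfolding push_fwd_eq_ext_limsup
    using ext_limsup_add_le[OF dense bounded_fibre_sum bounded_fibre_sum, OF assms] by simp
qed

lemma push_fwd_scale:
  assumes "continuous_on UNIV \<phi>" "t \<ge> 0"
  shows "push_fwd U f (\<lambda>x. t * \<phi> x) y = t * push_fwd U f \<phi> y"
proof -
  have "fibre_sum U f (\<lambda>x. t * \<phi> x) = (\<lambda>y. t * fibre_sum U f \<phi> y)"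
    by (simp add: fibre_sum_def sum_distrib_left fun_eq_iff)
  then show ?thesis unfolding push_fwd_eq_ext_limsup
    using ext_limsup_scale[OF dense bounded_fibre_sum[OF assms(1)] assms(2)] by simp
qed

context
  fixes \<nu> :: "('b \<Rightarrow> real) \<Rightarrow> real"
  assumes \<nu>: "positive_strong_submeasure \<nu>"
begin

lemma pull_back_le:
  assumes \<phi>: "continuous_on UNIV \<phi>" and "continuous_on UNIV \<psi>" "\<And>y. push_fwd U f \<phi> y \<le> \<psi> y"
  shows "pull_back U f \<nu> \<phi> \<le> \<nu> \<psi>"
  unfolding pull_back_def
proof (rule cInf_lower)
  show "\<nu> \<psi> \<in> {\<nu> \<psi> |\<psi>. continuous_on UNIV \<psi> \<and> (\<forall>y. push_fwd U f \<phi> y \<le> \<psi> y)}"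
    using assms by blast
  have lower: "- (real d * sup_norm \<phi>) \<le> push_fwd U f \<phi> y" for y
    using abs_push_fwd_le[OF \<phi>, of y] by linarith
  have "\<nu> (\<lambda>_. - (real d * sup_norm \<phi>)) \<le> \<nu> \<psi>'"
    if "continuous_on UNIV \<psi>'" "\<forall>y. push_fwd U f \<phi> y \<le> \<psi>' y" for \<psi>'
    using that lower
    by (intro positive_strong_submeasure_mono[OF \<nu> continuous_on_const]) (auto intro: order_trans)
  then show "bdd_below {\<nu> \<psi> |\<psi>. continuous_on UNIV \<psi> \<and> (\<forall>y. push_fwd U f \<phi> y \<le> \<psi> y)}"
    by (auto intro!: bdd_belowI[where m = "\<nu> (\<lambda>_. - (real d * sup_norm \<phi>))"])
qed

lemma le_pull_back:
  assumes \<phi>: "continuous_on UNIV \<phi>"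
    and "\<And>\<psi>. continuous_on UNIV \<psi> \<Longrightarrow> (\<And>y. push_fwd U f \<phi> y \<le> \<psi> y) \<Longrightarrow> a \<le> \<nu> \<psi>"
  shows "a \<le> pull_back U f \<nu> \<phi>"
  unfolding pull_back_def
proof (rule cInf_greatest)
  have "\<forall>y. push_fwd U f \<phi> y \<le> real d * sup_norm \<phi>"
    using abs_push_fwd_le[OF \<phi>] by (simp add: abs_le_iff)
  then show "{\<nu> \<psi> |\<psi>. continuous_on UNIV \<psi> \<and> (\<forall>y. push_fwd U f \<phi> y \<le> \<psi> y)} \<noteq> {}"
    using continuous_on_const by blast
qed (use assms in blast)

lemma pull_back_mono:
  assumes \<phi>: "continuous_on UNIV \<phi>" and \<psi>: "continuous_on UNIV \<psi>" and le: "\<And>x. \<phi> x \<le> \<psi> x"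
  shows "pull_back U f \<nu> \<phi> \<le> pull_back U f \<nu> \<psi>"
proof (rule le_pull_back[OF \<psi>])
  fix \<theta> assume "continuous_on UNIV \<theta>" "\<And>y. push_fwd U f \<psi> y \<le> \<theta> y"
  with push_fwd_mono[OF \<phi> \<psi> le] show "pull_back U f \<nu> \<phi> \<le> \<nu> \<theta>"
    by (intro pull_back_le[OF \<phi>]) (auto intro: order_trans)
qed

lemma pull_back_const:
  assumes c: "c \<ge> 0"
  shows "pull_back U f \<nu> (\<lambda>_. c * a) = real d * c * \<nu> (\<lambda>_. a)"
proof (rule antisym)
  have "pull_back U f \<nu> (\<lambda>_. c * a) \<le> \<nu> (\<lambda>_. (real d * c) * a)"
    by (rule pull_back_le) (auto simp: push_fwd_const)
  also have "\<dots> = real d * c * \<nu> (\<lambda>_. a)"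
    using positive_strong_submeasure_const[OF \<nu>] c by simp
  finally show "pull_back U f \<nu> (\<lambda>_. c * a) \<le> real d * c * \<nu> (\<lambda>_. a)" .
next
  show "real d * c * \<nu> (\<lambda>_. a) \<le> pull_back U f \<nu> (\<lambda>_. c * a)"
  proof (rule le_pull_back)
    fix \<psi> assume \<psi>: "continuous_on UNIV \<psi>" and "\<And>y. push_fwd U f (\<lambda>_. c * a) y \<le> \<psi> y"
    then have "\<nu> (\<lambda>_. (real d * c) * a) \<le> \<nu> \<psi>"
      by (intro positive_strong_submeasure_mono[OF \<nu> continuous_on_const \<psi>])
        (simp add: push_fwd_const mult.assoc)
    then show "real d * c * \<nu> (\<lambda>_. a) \<le> \<nu> \<psi>"
      using positive_strong_submeasure_const[OF \<nu>] c by simp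
  qed simp
qed

lemma pull_back_add_le:
  assumes \<phi>: "continuous_on UNIV \<phi>" and \<psi>: "continuous_on UNIV \<psi>"
  shows "pull_back U f \<nu> (\<lambda>x. \<phi> x + \<psi> x) \<le> pull_back U f \<nu> \<phi> + pull_back U f \<nu> \<psi>"
proof -
  have "pull_back U f \<nu> (\<lambda>x. \<phi> x + \<psi> x) - \<nu> \<theta>2 \<le> pull_back U f \<nu> \<phi>"
    if maj2: "continuous_on UNIV \<theta>2" "\<And>y. push_fwd U f \<psi> y \<le> \<theta>2 y" for \<theta>2
  proof (rule le_pull_back[OF \<phi>])
    fix \<theta>1 assume maj1: "continuous_on UNIV \<theta>1" "\<And>y. push_fwd U f \<phi> y \<le> \<theta>1 y"
    have "pull_back U f \<nu> (\<lambda>x. \<phi> x + \<psi> x) \<le> \<nu> (\<lambda>y. \<theta>1 y + \<theta>2 y)"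
    proof (rule pull_back_le)
      show "push_fwd U f (\<lambda>x. \<phi> x + \<psi> x) y \<le> \<theta>1 y + \<theta>2 y" for y
        using push_fwd_add_le[OF \<phi> \<psi>, of y] maj1(2)[of y] maj2(2)[of y] by linarith
    qed (use \<phi> \<psi> maj1 maj2 in \<open>auto intro: continuous_intros\<close>)
    also have "\<dots> \<le> \<nu> \<theta>1 + \<nu> \<theta>2"
      by (rule positive_strong_submeasure_add[OF \<nu> maj1(1) maj2(1)])
    finally show "pull_back U f \<nu> (\<lambda>x. \<phi> x + \<psi> x) - \<nu> \<theta>2 \<le> \<nu> \<theta>1" by simp
  qed
  then have "pull_back U f \<nu> (\<lambda>x. \<phi> x + \<psi> x) - pull_back U f \<nu> \<phi> \<le> pull_back U f \<nu> \<psi>"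
    by (intro le_pull_back[OF \<psi>]) (simp add: algebra_simps)
  then show ?thesis by simp
qed

lemma pull_back_scale_le:
  assumes \<phi>: "continuous_on UNIV \<phi>" and t: "t > 0"
  shows "pull_back U f \<nu> (\<lambda>x. t * \<phi> x) \<le> t * pull_back U f \<nu> \<phi>"
proof -
  have "pull_back U f \<nu> (\<lambda>x. t * \<phi> x) / t \<le> pull_back U f \<nu> \<phi>"
  proof (rule le_pull_back[OF \<phi>])
    fix \<psi> assume \<psi>: "continuous_on UNIV \<psi>" and le: "\<And>y. push_fwd U f \<phi> y \<le> \<psi> y"
    have "pull_back U f \<nu> (\<lambda>x. t * \<phi> x) \<le> \<nu> (\<lambda>y. t * \<psi> y)"
    proof (rule pull_back_le)
      show "push_fwd U f (\<lambda>x. t * \<phi> x) y \<le> t * \<psi> y" for y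
        using push_fwd_scale[OF \<phi>, of t y] le[of y] t by simp
    qed (use \<phi> \<psi> in \<open>auto intro: continuous_intros\<close>)
    also have "\<dots> = t * \<nu> \<psi>" using positive_strong_submeasure_scale[OF \<nu> \<psi>] t by simp
    finally show "pull_back U f \<nu> (\<lambda>x. t * \<phi> x) / t \<le> \<nu> \<psi>"
      using t by (simp add: divide_le_eq mult.commute)
  qed
  then show ?thesis using t by (simp add: divide_le_eq mult.commute)
qed

lemma pull_back_scale:
  assumes \<phi>: "continuous_on UNIV \<phi>" and t: "t \<ge> 0"
  shows "pull_back U f \<nu> (\<lambda>x. t * \<phi> x) = t * pull_back U f \<nu> \<phi>"
proof (cases "t = 0")
  case True
  then show ?thesis using pull_back_const[of 0 0] by simp
next
  case False
  with t have t: "t > 0" by simp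
  have t\<phi>: "continuous_on UNIV (\<lambda>x. t * \<phi> x)" using \<phi> by (intro continuous_intros)
  \<comment> \<open>the reverse inequality is the same one applied to \<open>t\<phi>\<close> and \<open>1/t\<close>\<close>
  have "(\<lambda>x. (1 / t) * (t * \<phi> x)) = \<phi>" using t by (simp add: fun_eq_iff)
  then have "pull_back U f \<nu> \<phi> \<le> (1 / t) * pull_back U f \<nu> (\<lambda>x. t * \<phi> x)"
    using pull_back_scale_le[OF t\<phi>, of "1 / t"] t by simp
  then have "t * pull_back U f \<nu> \<phi> \<le> pull_back U f \<nu> (\<lambda>x. t * \<phi> x)"
    using t by (simp add: field_simps)
  with pull_back_scale_le[OF \<phi> t] show ?thesis by simp
qed

lemma positive_strong_submeasure_pull_back: "positive_strong_submeasure (pull_back U f \<nu>)"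
  unfolding positive_strong_submeasure_def strong_submeasure_def
proof (intro conjI allI impI exI)
  show "\<bar>pull_back U f \<nu> \<phi>\<bar> \<le> max \<bar>pull_back U f \<nu> (\<lambda>_. 1)\<bar> \<bar>pull_back U f \<nu> (\<lambda>_. -1)\<bar> * sup_norm \<phi>"
    if "continuous_on UNIV \<phi>" for \<phi>
  proof (rule abs_le_sup_norm_if_mono_homogeneous[OF X_compact that pull_back_mono])
    show "pull_back U f \<nu> (\<lambda>_. c * a) = c * pull_back U f \<nu> (\<lambda>_. a)" if "c \<ge> 0" for c a
      using pull_back_const[OF that, of a] pull_back_const[of 1 a] by simp
  qed
qed (use pull_back_add_le pull_back_scale pull_back_mono in auto)

end

end

theorem theorem2p12:
  fixes f :: "'a::metric_space \<Rightarrow> 'b::metric_space"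
    and D U :: "'a set" and d :: nat
  assumes X_compact: "compact (UNIV :: 'a set)"
    and Y_compact: "compact (UNIV :: 'b set)"
    and D_open: "open D" and D_dense: "closure D = UNIV"
    and f_cont: "continuous_on D f"
    and U_open: "open U" and U_dense: "closure U = UNIV" and U_sub: "U \<subseteq> D"
    and fU_open: "open (f ` U)" and fU_dense: "closure (f ` U) = UNIV"
    and cover: "covering_space U f (f ` U)"
    and proper: "proper_map (top_of_set U) (top_of_set (f ` U)) f"
    and degree: "\<forall>y\<in>f ` U. finite {x\<in>U. f x = y} \<and> card {x\<in>U. f x = y} = d"
  shows "\<forall>\<nu>::('b \<Rightarrow> real) \<Rightarrow> real. positive_strong_submeasure \<nu> \<longrightarrow>
           positive_strong_submeasure (pull_back U f \<nu>) \<and>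
           pull_back U f \<nu> (\<lambda>_. 1) = real d * \<nu> (\<lambda>_. 1) \<and>
           pull_back U f \<nu> (\<lambda>_. -1) = real d * \<nu> (\<lambda>_. -1) \<and>
           sm_norm (pull_back U f \<nu>) = real d * sm_norm \<nu>"
proof (intro allI impI)
  fix \<nu> :: "('b \<Rightarrow> real) \<Rightarrow> real" assume \<nu>: "positive_strong_submeasure \<nu>"
  note const = pull_back_const[OF X_compact fU_dense degree \<nu>, of 1]
  have positive: "positive_strong_submeasure (pull_back U f \<nu>)"
    by (rule positive_strong_submeasure_pull_back[OF X_compact fU_dense degree \<nu>])
  have plus_one: "pull_back U f \<nu> (\<lambda>_. 1) = real d * \<nu> (\<lambda>_. 1)"
    and minus_one: "pull_back U f \<nu> (\<lambda>_. -1) = real d * \<nu> (\<lambda>_. -1)"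
    using const[of 1] const[of "-1"] by simp_all
  have "sm_norm (pull_back U f \<nu>) = max \<bar>real d * \<nu> (\<lambda>_. 1)\<bar> \<bar>real d * \<nu> (\<lambda>_. -1)\<bar>"
    using sm_norm_positive_strong_submeasure[OF X_compact positive] plus_one minus_one by simp
  also have "\<dots> = real d * sm_norm \<nu>"
    by (simp add: sm_norm_positive_strong_submeasure[OF Y_compact \<nu>] abs_mult max_mult_distrib_left)
  finally show "positive_strong_submeasure (pull_back U f \<nu>) \<and>
           pull_back U f \<nu> (\<lambda>_. 1) = real d * \<nu> (\<lambda>_. 1) \<and>
           pull_back U f \<nu> (\<lambda>_. -1) = real d * \<nu> (\<lambda>_. -1) \<and>
           sm_norm (pull_back U f \<nu>) = real d * sm_norm \<nu>"
    using positive plus_one minus_one by blast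
qed

end
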